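(* Let $S$, $\Phi$, $v$, $\hat S$, $S_\theta$ and $\theta_0$ be as in the context. Let $w=(w_0w_1\dots)\in\Sigma$ be such that $x=\Phi(w)\in\hat S$. Then for every $n$ the three points $\psi_{w_0\dots w_n}(\bar A),\psi_{w_0\dots w_n}(\bar B),\psi_{w_0\dots w_n}(\bar C)$ can be labelled $A_{w,n},B_{w,n},C_{w,n}$ in such a way that: (1) as $n\to\infty$, $$\frac{\max\big(\|P^\perp_{v(x)}(A_{w,n}-B_{w,n})\|,\ \|P^\perp_{v(x)}(B_{w,n}-C_{w,n})\|,\ \|P^\perp_{v(x)}(C_{w,n}-A_{w,n})\|\big)}{\|P_{v(x)}(A_{w,n}-B_{w,n})\|}\longrightarrow0;$$ (2) if $\theta\in(0,\theta_0]$ and $x\in\psi_{w_0\dots w_{n_k}}(S_\theta)$ for a sequence $n_k\nearrow+\infty$, then as $k\to\infty$ $$\max\Big(\frac{\|P^\perp_{v(x)}(x-A_{w,n_k})\|}{\|P_{v(x)}(x-A_{w,n_k})\|},\ \frac{\|P^\perp_{v(x)}(x-B_{w,n_k})\|}{\|P_{v(x)}(x-B_{w,n_k})\|}\Big)\longrightarrow0.$$ (Neither limit is asserted to be uniform in $x$.)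
   Context: Let $T_1=\begin{pmatrix}3/5&0\\0&1/5\end{pmatrix}$, $T_2=\begin{pmatrix}3/10&\sqrt3/10\\ \sqrt3/10&1/2\end{pmatrix}$, $T_3=\begin{pmatrix}3/10&-\sqrt3/10\\ -\sqrt3/10&1/2\end{pmatrix}$, $\bar A=(0,0)$, $\bar B=(1,1/\sqrt3)$, $\bar C=(1,-1/\sqrt3)$, $\psi_1(x)=\bar A+T_1(x-\bar A)$, $\psi_2(x)=\bar B+T_2(x-\bar B)$, $\psi_3(x)=\bar C+T_3(x-\bar C)$; the harmonic Sierpinski gasket $S$ is the unique nonempty compact set with $S=\bigcup_i\psi_i(S)$. Let $\Sigma=\{1,2,3\}^{\mathbb N}$, $\psi_{w_0\dots w_l}=\psi_{w_0}\circ\cdots\circ\psi_{w_l}$ (affine with constant derivative $D\psi_{w_0\dots w_l}$), and $\Phi:\Sigma\to S$, $\Phi(w)=$ the unique point of $\bigcap_l\psi_{w_0\dots w_l}(\triangle)$, $\triangle$ the closed triangle $\bar A\bar B\bar C$. Points with more than one coding are exactly those in the countable set $N=\{\psi_{w_0\dots w_l}(P): l\ge0,\ w\in\Sigma,\ P\in\{\bar A,\bar B,\bar C\}\}$. For a unit vector $v$, $P_v$ is orthogonal projection onto $\mathbb Rv$ and $P_v^\perp=I-P_v$; $\|A\|_{HS}^2=\mathrm{tr}({}^tAA)$. Kusuoka's measure: with $(\mathcal LA)(x)=\sum_i{}^tD\psi_iA_{\psi_i(x)}D\psi_i$ on continuous symmetric-matrix fields, having simple positive eigenvalue $\beta$,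 let $\tau$ be the unique semipositive-definite symmetric-matrix-valued Borel measure on $S$ with $\mathrm{tr}\,\tau(S)=1$ and $\mathcal L^*\tau=\beta\tau$ ($\tau(S)$ is a positive multiple of $Id$); $\kappa(E)=\mathrm{tr}\,\tau(E)$ is a non-atomic probability measure. There is a Borel field of unit vectors $v$ with $\tau=P_{v(x)}\kappa$. Let $\tilde S$ be the Borel set of $x=\Phi(w)\in S$ at which $P_{v(x)}=\lim_{l\to\infty}D\psi_{w_0\dots w_{l-1}}{}^tD\psi_{w_0\dots w_{l-1}}/\|D\psi_{w_0\dots w_{l-1}}\|_{HS}^2$ holds; $\kappa(\tilde S)=1$. Set $\hat S=\tilde S\setminus N$; $\kappa(\hat S)=1$. Geodesics: $AC^2([0,1],S)$ is the set of absolutely continuous $\gamma:[0,1]\to\mathbb R^2$ with $\gamma_s\in S$ for all $s$ and $\int_0^1\|\dot\gamma_s\|^2ds<\infty$. For $x,y\in S$ there is a unique minimizer $\gamma_{x,y}$ of $\int_0^1\|\dot\gamma_s\|^2ds$ among such curves with $\gamma_0=x,\gamma_1=y$. Let $M=\gamma_{\bar A\bar B}([0,1])\cup\gamma_{\bar B\bar C}([0,1])\cup\gamma_{\bar A\bar C}([0,1])$, and for $\theta>0$ let $S_\theta=\{x\in S: d(x,M)\ge\theta\}$, $d$ the Euclidean distance. It is known that $\kappa(M)=0$ and there is $\theta_0>0$ such that $S_\theta\ne\emptyset$ for $\theta\in(0,\theta_0]$. *)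

theory Defs
  imports "HOL-Analysis.Analysis"
begin

(* Points of the plane are real^2, 2x2 matrices are real^2^2 (row-major: A$i$j). *)

datatype idx = I1 | I2 | I3

definition T :: "idx \<Rightarrow> real^2^2" where
  "T i = (case i of
      I1 \<Rightarrow> vector [vector [3/5, 0], vector [0, 1/5]]
    | I2 \<Rightarrow> vector [vector [3/10, sqrt 3/10], vector [sqrt 3/10, 1/2]]
    | I3 \<Rightarrow> vector [vector [3/10, - sqrt 3/10], vector [- sqrt 3/10, 1/2]])"

definition vtx :: "idx \<Rightarrow> real^2" where
  "vtx i = (case i of
      I1 \<Rightarrow> vector [0, 0]
    | I2 \<Rightarrow> vector [1, 1 / sqrt 3]
    | I3 \<Rightarrow> vector [1, - 1 / sqrt 3])"

definition psi :: "idx \<Rightarrow> real^2 \<Rightarrow> real^2" where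
  "psi i x = vtx i + T i *v (x - vtx i)"

definition HSG :: "(real^2) set" where
  "HSG = (THE K. K \<noteq> {} \<and> compact K \<and> K = (\<Union>i. psi i ` K))"

(* psiw w n = psi_{w_0} o ... o psi_{w_{n-1}} (identity for n = 0);
   so psi_{w_0...w_l} = psiw w (Suc l) *)
fun psiw :: "(nat \<Rightarrow> idx) \<Rightarrow> nat \<Rightarrow> real^2 \<Rightarrow> real^2" where
  "psiw w 0 = id"
| "psiw w (Suc n) = psiw w n \<circ> psi (w n)"

(* Dw w n = D psi_{w_0...w_{n-1}} = T_{w_0} ... T_{w_{n-1}} (chain rule; identity for n = 0) *)
fun Dw :: "(nat \<Rightarrow> idx) \<Rightarrow> nat \<Rightarrow> real^2^2" where
  "Dw w 0 = mat 1"
| "Dw w (Suc n) = Dw w n ** T (w n)"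

definition triangle :: "(real^2) set" where
  "triangle = convex hull (range vtx)"

definition Phi :: "(nat \<Rightarrow> idx) \<Rightarrow> real^2" where
  "Phi w = (THE p. (\<Inter>l. psiw w (Suc l) ` triangle) = {p})"

definition Nset :: "(real^2) set" where
  "Nset = {psiw w (Suc l) (vtx i) | w l i. True}"

definition projmat :: "real^2 \<Rightarrow> real^2^2" where
  "projmat v = (\<chi> i j. v$i * v$j)"

definition projP :: "real^2 \<Rightarrow> real^2 \<Rightarrow> real^2" where
  "projP v y = (y \<bullet> v) *\<^sub>R v"

definition projPerp :: "real^2 \<Rightarrow> real^2 \<Rightarrow> real^2" where
  "projPerp v y = y - projP v y"

definition hs_sq :: "real^2^2 \<Rightarrow> real" where
  "hs_sq A = trace (transpose A ** A)"

definition Lop :: "(real^2 \<Rightarrow> real^2^2) \<Rightarrow> real^2 \<Rightarrow> real^2^2" where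
  "Lop A x = (\<Sum>i\<in>UNIV. transpose (T i) ** A (psi i x) ** T i)"

(* Pairing <tau, A> = \<integral> tr(A d tau) for the matrix measure tau = P_v kappa *)
definition pairing :: "(real^2) measure \<Rightarrow> (real^2 \<Rightarrow> real^2) \<Rightarrow> (real^2 \<Rightarrow> real^2^2) \<Rightarrow> real" where
  "pairing \<kappa> v A = (\<integral>x\<in>HSG. trace (projmat (v x) ** A x) \<partial>\<kappa>)"

(* The positive eigenvalue beta of L: L(Id) = (3/5) Id for the constant field Id. *)
definition beta :: real where "beta = 3/5"

(* (kappa, v) describes Kusuoka's measure: tau = P_v kappa is a semipositive symmetric
   matrix-valued Borel measure on S, tr tau(S) = kappa(S) = 1, and L^* tau = beta tau,
   i.e. <tau, L A> = beta <tau, A> for all continuous symmetric-matrix fields A on S;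
   v is a Borel field of unit vectors. *)
definition kusuoka_pair :: "(real^2) measure \<Rightarrow> (real^2 \<Rightarrow> real^2) \<Rightarrow> bool" where
  "kusuoka_pair \<kappa> v \<longleftrightarrow>
     sets \<kappa> = sets borel \<and> emeasure \<kappa> UNIV = 1 \<and> emeasure \<kappa> (UNIV - HSG) = 0 \<and>
     v \<in> borel_measurable borel \<and> (\<forall>x\<in>HSG. norm (v x) = 1) \<and>
     (\<forall>A. continuous_on HSG A \<and> (\<forall>x\<in>HSG. transpose (A x) = A x) \<longrightarrow>
          pairing \<kappa> v (Lop A) = beta * pairing \<kappa> v A)"

definition Stilde :: "(real^2 \<Rightarrow> real^2) \<Rightarrow> (real^2) set" where
  "Stilde v = {x \<in> HSG. \<exists>w. x = Phi w \<and>
      (\<lambda>l. (1 / hs_sq (Dw w l)) *\<^sub>R (Dw w l ** transpose (Dw w l))) \<longlonglongrightarrow> projmat (v x)}"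

definition Shat :: "(real^2 \<Rightarrow> real^2) \<Rightarrow> (real^2) set" where
  "Shat v = Stilde v - Nset"

definition abs_cont01 :: "(real \<Rightarrow> real^2) \<Rightarrow> bool" where
  "abs_cont01 \<gamma> \<longleftrightarrow> (\<forall>\<epsilon>>0. \<exists>\<delta>>0. \<forall>n (a::nat\<Rightarrow>real) b.
      (\<forall>k<n. 0 \<le> a k \<and> a k \<le> b k \<and> b k \<le> 1) \<and>
      (\<forall>k<n. \<forall>j<n. k \<noteq> j \<longrightarrow> b k \<le> a j \<or> b j \<le> a k) \<and>
      (\<Sum>k<n. b k - a k) < \<delta> \<longrightarrow>
      (\<Sum>k<n. norm (\<gamma> (b k) - \<gamma> (a k))) < \<epsilon>)"

definition velocity :: "(real \<Rightarrow> real^2) \<Rightarrow> real \<Rightarrow> real^2" where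
  "velocity \<gamma> s = vector_derivative \<gamma> (at s within {0..1})"

definition AC2 :: "(real \<Rightarrow> real^2) \<Rightarrow> bool" where
  "AC2 \<gamma> \<longleftrightarrow> abs_cont01 \<gamma> \<and> (\<forall>s\<in>{0..1}. \<gamma> s \<in> HSG) \<and>
     (\<lambda>s. (norm (velocity \<gamma> s))\<^sup>2) integrable_on {0..1}"

definition energy :: "(real \<Rightarrow> real^2) \<Rightarrow> real" where
  "energy \<gamma> = integral {0..1} (\<lambda>s. (norm (velocity \<gamma> s))\<^sup>2)"

definition is_geodesic :: "real^2 \<Rightarrow> real^2 \<Rightarrow> (real \<Rightarrow> real^2) \<Rightarrow> bool" where
  "is_geodesic x y \<gamma> \<longleftrightarrow> AC2 \<gamma> \<and> \<gamma> 0 = x \<and> \<gamma> 1 = y \<and>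
     (\<forall>\<eta>. AC2 \<eta> \<and> \<eta> 0 = x \<and> \<eta> 1 = y \<longrightarrow> energy \<gamma> \<le> energy \<eta>)"

(* gamma_{x,y}([0,1]); the minimizer is unique as a curve on [0,1] *)
definition geod_image :: "real^2 \<Rightarrow> real^2 \<Rightarrow> (real^2) set" where
  "geod_image x y = (THE G. \<exists>\<gamma>. is_geodesic x y \<gamma> \<and> G = \<gamma> ` {0..1})"

definition Mset :: "(real^2) set" where
  "Mset = geod_image (vtx I1) (vtx I2) \<union> geod_image (vtx I2) (vtx I3) \<union> geod_image (vtx I1) (vtx I3)"

definition S_theta :: "real \<Rightarrow> (real^2) set" where
  "S_theta \<theta> = {x \<in> HSG. infdist x Mset \<ge> \<theta>}"

end

theory Submission
  imports Defs
begin

text \<open>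
  Let \<open>D\<^sub>n\<close> be the derivative of \<open>\<psi>\<^sub>w\<^sub>0 \<circ> \<dots> \<circ> \<psi>\<^sub>w\<^sub>n\<close>, write \<open>x\<close> as the image of \<open>y\<^sub>n\<close> in
  the gasket under that map, and put \<open>q\<^sub>n = D\<^sub>n\<^sup>T v\<close> with \<open>v = v(x)\<close>. For every vector \<open>d\<close>,
  \<open>|P\<^sub>v (D\<^sub>n d)| = |d \<bullet> q\<^sub>n|\<close> while \<open>|P\<^sub>v\<^sup>\<bottom> (D\<^sub>n d)| \<le> |d| |D\<^sub>n\<^sup>T v\<^sup>\<bottom>|\<close>, and the ratio
  \<open>|D\<^sub>n\<^sup>T v\<^sup>\<bottom>| / |q\<^sub>n|\<close> tends to \<open>0\<close> because \<open>D\<^sub>n D\<^sub>n\<^sup>T / |D\<^sub>n|\<^sup>2 \<rightarrow> P\<^sub>v\<close>; this convergence is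
  only assumed along some coding of \<open>x\<close>, but \<open>x \<notin> N\<close> has just one. Both limits therefore
  follow once the vertices are labelled so that each difference \<open>d\<close> in a denominator
  satisfies \<open>|d \<bullet> q\<^sub>n| \<ge> c |q\<^sub>n| |d|\<close>. That is a statement about the three numbers
  \<open>q\<^sub>n \<bullet> vtx i\<close> and the barycentric coordinates \<open>t\<close> of \<open>y\<^sub>n\<close>: as \<open>y\<^sub>n\<close> lies in a first-level
  cell \<open>\<psi>\<^sub>i(\<triangle>)\<close>, \<open>t\<^sub>i \<ge> 2/5\<close> and the other two coordinates are at least \<open>(1 - t\<^sub>i)/3\<close>,
  and an elementary case analysis yields two vertices \<open>P, Q\<close> whose values are far apart
  and far from the value at \<open>y\<^sub>n\<close>, relative to \<open>1 - t\<^sub>P\<close> and \<open>1 - t\<^sub>Q\<close> respectively.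
\<close>

section \<open>Barycentric coordinates\<close>

lemma inner_vec2: "(x::real^2) \<bullet> y = x$1 * y$1 + x$2 * y$2"
  by (simp add: inner_vec_def sum_2)

lemma norm_vec2_sq: "(norm (x::real^2))\<^sup>2 = (x$1)\<^sup>2 + (x$2)\<^sup>2"
  unfolding power2_norm_eq_inner inner_vec2 by (simp add: power2_eq_square)

lemma matrix_vector_mult_vec2_nth: "((A::real^2^2) *v x) $ i = A$i$1 * x$1 + A$i$2 * x$2"
  by (simp add: matrix_vector_mult_def sum_2)

lemma sqrt3_mult_sqrt3 [simp]: "sqrt 3 * (sqrt 3 * x) = 3 * (x::real)"
  by (simp add: mult.assoc[symmetric])

lemma vtx_nth [simp]:
  "vtx I1 $ 1 = 0" "vtx I1 $ 2 = 0"
  "vtx I2 $ 1 = 1" "vtx I2 $ 2 = 1 / sqrt 3"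
  "vtx I3 $ 1 = 1" "vtx I3 $ 2 = - 1 / sqrt 3"
  by (simp_all add: vtx_def)

lemma T_nth [simp]:
  "T I1 $1$1 = 3/5" "T I1 $1$2 = 0" "T I1 $2$1 = 0" "T I1 $2$2 = 1/5"
  "T I2 $1$1 = 3/10" "T I2 $1$2 = sqrt 3/10" "T I2 $2$1 = sqrt 3/10" "T I2 $2$2 = 1/2"
  "T I3 $1$1 = 3/10" "T I3 $1$2 = - sqrt 3/10" "T I3 $2$1 = - sqrt 3/10" "T I3 $2$2 = 1/2"
  by (simp_all add: T_def)

lemma UNIV_idx: "(UNIV :: idx set) = {I1, I2, I3}"
  using idx.exhaust by auto

lemma sum_UNIV_idx: "(\<Sum>i\<in>UNIV. f i) = f I1 + f I2 + f I3"
  by (simp add: UNIV_idx add.assoc)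

lemma all_idx: "(\<forall>i. P i) \<longleftrightarrow> P I1 \<and> P I2 \<and> P I3"
  by (metis idx.exhaust)

lemma finite_UNIV_idx [simp]: "finite (UNIV :: idx set)"
  by (simp add: UNIV_idx)

definition bary :: "idx \<Rightarrow> real^2 \<Rightarrow> real" where
  "bary i y = (case i of
      I1 \<Rightarrow> 1 - y$1
    | I2 \<Rightarrow> (y$1 + sqrt 3 * y$2) / 2
    | I3 \<Rightarrow> (y$1 - sqrt 3 * y$2) / 2)"

lemma sum_bary: "bary I1 y + bary I2 y + bary I3 y = 1"
  by (simp add: bary_def field_simps)

lemma bary_combination: "y = bary I1 y *\<^sub>R vtx I1 + bary I2 y *\<^sub>R vtx I2 + bary I3 y *\<^sub>R vtx I3"
  by (simp add: vec_eq_iff forall_2 bary_def field_simps)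

lemma bary_eqI: "(\<And>i. bary i y = bary i z) \<Longrightarrow> y = z"
  by (metis bary_combination)

lemma bary_vtx: "bary i (vtx j) = (if i = j then 1 else 0)"
  by (cases i; cases j; simp add: bary_def)

lemma bary_psi:
  "bary j (psi i y) = (if j = i then (2 + 3 * bary i y) / 5 else (1 - bary i y + bary j y) / 5)"
  by (cases i; cases j; simp add: bary_def psi_def matrix_vector_mult_vec2_nth field_simps)

lemma triangle_iff_bary: "y \<in> triangle \<longleftrightarrow> (\<forall>i. 0 \<le> bary i y)"
proof
  assume "y \<in> triangle"
  then obtain a b c where abc: "0 \<le> a" "0 \<le> b" "0 \<le> c" "a + b + c = 1"
    "y = a *\<^sub>R vtx I1 + b *\<^sub>R vtx I2 + c *\<^sub>R vtx I3"
    unfolding triangle_def UNIV_idx image_insert image_empty convex_hull_3 by blast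
  then have "bary I1 y = a" "bary I2 y = b" "bary I3 y = c"
    by (simp_all add: bary_def field_simps)
  with abc show "\<forall>i. 0 \<le> bary i y"
    by (metis idx.exhaust)
next
  assume "\<forall>i. 0 \<le> bary i y"
  then show "y \<in> triangle"
    unfolding triangle_def UNIV_idx image_insert image_empty convex_hull_3
    using bary_combination[of y] sum_bary[of y] by blast
qed

lemma psi_triangle: "y \<in> triangle \<Longrightarrow> psi i y \<in> triangle"
  using sum_bary[of y] by (cases i) (auto simp: triangle_iff_bary bary_psi all_idx)

lemma bary_psi_cell:
  assumes "z \<in> triangle"
  shows "2/5 \<le> bary i (psi i z)" "j \<noteq> i \<Longrightarrow> 1 - bary i (psi i z) \<le> 3 * bary j (psi i z)"
proof -
  have nonneg: "0 \<le> bary k z" for k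
    using assms triangle_iff_bary by blast
  then have "bary i z \<le> 1"
    using sum_bary[of z] by (cases i) (smt (verit))+
  with nonneg[of i] nonneg[of j]
  show "2/5 \<le> bary i (psi i z)" "j \<noteq> i \<Longrightarrow> 1 - bary i (psi i z) \<le> 3 * bary j (psi i z)"
    by (simp_all add: bary_psi field_simps)
qed

lemma bary_lt_1:
  assumes "y \<in> triangle" "y \<noteq> vtx P"
  shows "bary P y < 1"
proof (rule ccontr)
  assume "\<not> bary P y < 1"
  moreover have "0 \<le> bary I1 y" "0 \<le> bary I2 y" "0 \<le> bary I3 y"
    using assms(1) triangle_iff_bary by blast+
  ultimately have "bary k y = bary k (vtx P)" for k
    using sum_bary[of y] by (cases k; cases P) (simp_all add: bary_vtx)
  then have "y = vtx P"
    by (rule bary_eqI)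
  with assms(2) show False ..
qed

lemma inner_eq_sum_bary: "q \<bullet> y = (\<Sum>k\<in>UNIV. bary k y * (q \<bullet> vtx k))"
proof -
  have "q \<bullet> y = q \<bullet> (bary I1 y *\<^sub>R vtx I1 + bary I2 y *\<^sub>R vtx I2 + bary I3 y *\<^sub>R vtx I3)"
    using bary_combination[of y] by (rule arg_cong)
  then show ?thesis
    by (simp add: sum_UNIV_idx inner_add_right)
qed

lemma norm_vtx_diff_le: "norm (vtx i - vtx j) \<le> 2"
proof -
  have "(norm (vtx i - vtx j))\<^sup>2 \<le> 2\<^sup>2"
    by (cases i; cases j) (simp_all add: norm_vec2_sq power_divide)
  then show ?thesis
    by (rule power2_le_imp_le) simp
qed

lemma norm_diff_vtx_le:
  assumes "y \<in> triangle"
  shows "norm (y - vtx P) \<le> 2 * (1 - bary P y)"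
proof -
  have nonneg: "0 \<le> bary k y" for k
    using assms triangle_iff_bary by blast
  have "y - vtx P = (\<Sum>k\<in>UNIV. bary k y *\<^sub>R (vtx k - vtx P))"
    using sum_bary[of y] bary_combination[of y]
    by (simp add: sum_UNIV_idx scaleR_diff_right algebra_simps flip: scaleR_add_left)
  also have "norm \<dots> \<le> (\<Sum>k\<in>UNIV. bary k y * norm (vtx k - vtx P))"
    using norm_sum[of "\<lambda>k. bary k y *\<^sub>R (vtx k - vtx P)" UNIV] nonneg by simp
  also have "\<dots> \<le> (\<Sum>k\<in>UNIV. if k = P then 0 else bary k y * 2)"
  proof (rule sum_mono)
    fix k
    show "bary k y * norm (vtx k - vtx P) \<le> (if k = P then 0 else bary k y * 2)"
      using mult_left_mono[OF norm_vtx_diff_le nonneg] by simp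
  qed
  also have "\<dots> = 2 * (1 - bary P y)"
    using sum_bary[of y] by (cases P) (simp_all add: sum_UNIV_idx)
  finally show ?thesis .
qed

section \<open>Contraction estimates\<close>

text \<open>
  Each \<open>T i\<close> is symmetric with eigenvalues \<open>3/5\<close> and \<open>1/5\<close>; the squares below are the
  components along the eigenvectors.
\<close>

lemma norm_T_mult_le: "norm (T i *v z) \<le> 3/5 * norm z"
proof -
  have "(norm (T i *v z))\<^sup>2 = (3/5 * norm z)\<^sup>2 - (case i of
      I1 \<Rightarrow> 8/25 * (z$2)\<^sup>2
    | I2 \<Rightarrow> 2/25 * (sqrt 3 * z$1 - z$2)\<^sup>2
    | I3 \<Rightarrow> 2/25 * (sqrt 3 * z$1 + z$2)\<^sup>2)"
    unfolding norm_vec2_sq power_mult_distrib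
    by (cases i) (simp_all add: matrix_vector_mult_vec2_nth power2_eq_square algebra_simps)
  then have "(norm (T i *v z))\<^sup>2 \<le> (3/5 * norm z)\<^sup>2"
    by (cases i) simp_all
  then show ?thesis
    by (rule power2_le_imp_le) simp
qed

lemma norm_T_mult_ge: "1/5 * norm z \<le> norm (T i *v z)"
proof -
  have "(norm (T i *v z))\<^sup>2 = (1/5 * norm z)\<^sup>2 + (case i of
      I1 \<Rightarrow> 8/25 * (z$1)\<^sup>2
    | I2 \<Rightarrow> 2/25 * (z$1 + sqrt 3 * z$2)\<^sup>2
    | I3 \<Rightarrow> 2/25 * (z$1 - sqrt 3 * z$2)\<^sup>2)"
    unfolding norm_vec2_sq power_mult_distrib
    by (cases i) (simp_all add: matrix_vector_mult_vec2_nth power2_eq_square algebra_simps)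
  then have "(1/5 * norm z)\<^sup>2 \<le> (norm (T i *v z))\<^sup>2"
    by (cases i) simp_all
  then show ?thesis
    by (rule power2_le_imp_le) simp
qed

lemma psi_diff: "psi i y - psi i z = T i *v (y - z)"
  by (simp add: psi_def matrix_vector_mult_diff_distrib)

lemma psiw_diff: "psiw w n y - psiw w n z = Dw w n *v (y - z)"
  by (induction n arbitrary: y z) (simp_all add: psi_diff matrix_vector_mul_assoc)

lemma dist_psiw_le: "dist (psiw w n y) (psiw w n z) \<le> (3/5)^n * dist y z"
proof (induction n arbitrary: y z)
  case (Suc n)
  have "dist (psiw w (Suc n) y) (psiw w (Suc n) z) \<le> (3/5)^n * dist (psi (w n) y) (psi (w n) z)"
    using Suc.IH by simp
  also have "\<dots> \<le> (3/5)^n * (3/5 * dist y z)"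
    using norm_T_mult_le by (intro mult_left_mono) (simp_all add: dist_norm psi_diff)
  finally show ?case
    by simp
qed simp

lemma inj_psiw: "inj (psiw w n)"
proof (induction n)
  case (Suc n)
  have "inj (psi i)" for i
  proof (rule injI)
    fix y z
    assume "psi i y = psi i z"
    then have "norm (y - z) \<le> 0"
      using norm_T_mult_ge[of "y - z" i] by (simp add: psi_diff[symmetric])
    then show "y = z"
      by simp
  qed
  with Suc.IH show ?case
    by (simp del: o_apply add: inj_compose)
qed simp

lemma continuous_on_psiw: "continuous_on A (psiw w n)"
  by (rule lipschitz_on_continuous_on[OF lipschitz_onI[OF dist_psiw_le]]) simp

lemma continuous_on_psi: "continuous_on A (psi i)"
  using continuous_on_psiw[of A "\<lambda>_. i" 1] by simp

lemma psiw_triangle: "y \<in> triangle \<Longrightarrow> psiw w n y \<in> triangle"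
  by (induction n arbitrary: y) (simp_all add: psi_triangle)

lemma psiw_cong: "(\<And>k. k < n \<Longrightarrow> w k = w' k) \<Longrightarrow> psiw w n = psiw w' n"
  by (induction n) auto

lemma psiw_Suc_left: "psiw w (Suc n) = psi (w 0) \<circ> psiw (\<lambda>k. w (Suc k)) n"
proof (induction n)
  case (Suc n)
  then show ?case
    by (metis comp_assoc psiw.simps(2))
qed simp

lemma psi_vtx: "psi i (vtx i) = vtx i"
  by (simp add: psi_def)

lemma vtx_triangle: "vtx i \<in> triangle"
  unfolding triangle_def by (rule hull_inc) simp

lemma compact_triangle: "compact triangle"
  unfolding triangle_def UNIV_idx by (rule finite_imp_compact_convex_hull) simp

section \<open>The gasket as closure of the vertex orbit\<close>

lemma eventually_power_mult_less:
  fixes r :: real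
  assumes "0 \<le> r" "r < 1" "0 < e"
  shows "eventually (\<lambda>n. r^n * c < e) sequentially"
proof -
  have "(\<lambda>n. r^n * c) \<longlonglongrightarrow> 0"
    using assms(1,2) by (intro tendsto_mult_left_zero LIMSEQ_realpow_zero)
  then show ?thesis
    using assms(3) by (rule order_tendstoD(2))
qed

lemma mem_closure_power_boundI:
  fixes r :: real
  assumes "\<And>n. \<exists>a\<in>A. dist a z \<le> r^n * c" and "0 \<le> r" "r < 1"
  shows "z \<in> closure A"
  unfolding closure_approachable
proof (intro allI impI)
  fix e :: real
  assume "0 < e"
  then obtain n where "r^n * c < e"
    using eventually_power_mult_less[OF assms(2,3), of e c] by (auto simp: eventually_sequentially)
  with assms(1)[of n] show "\<exists>a\<in>A. dist a z < e"
    by (meson order_le_less_trans)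
qed

definition vertex_orbit :: "(real^2) set" where
  "vertex_orbit = {psiw w n (vtx i) | w n i. True}"

lemma vtx_vertex_orbit: "vtx i \<in> vertex_orbit"
proof -
  have "vtx i = psiw (\<lambda>_. i) 0 (vtx i)"
    by simp
  then show ?thesis
    unfolding vertex_orbit_def by blast
qed

lemma closure_vertex_orbit_triangle: "closure vertex_orbit \<subseteq> triangle"
proof -
  have "vertex_orbit \<subseteq> triangle"
    unfolding vertex_orbit_def using psiw_triangle vtx_triangle by blast
  then show ?thesis
    using compact_triangle by (simp add: closure_minimal compact_imp_closed)
qed

lemma compact_closure_vertex_orbit: "compact (closure vertex_orbit)"
  using closure_vertex_orbit_triangle compact_triangle
  by (meson bounded_subset compact_eq_bounded_closed closed_closure)

lemma psi_vertex_orbit: "psi i ` vertex_orbit \<subseteq> vertex_orbit"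
proof -
  have "psi i (psiw w n y) = psiw (case_nat i w) (Suc n) y" for w n y
    by (simp only: psiw_Suc_left) simp
  then show ?thesis
    unfolding vertex_orbit_def by blast
qed

lemma vertex_orbit_subset_cells: "vertex_orbit \<subseteq> (\<Union>i. psi i ` vertex_orbit)"
proof
  fix y
  assume "y \<in> vertex_orbit"
  then obtain w n j where y: "y = psiw w n (vtx j)"
    unfolding vertex_orbit_def by blast
  show "y \<in> (\<Union>i. psi i ` vertex_orbit)"
  proof (cases n)
    case 0
    then have "y = psi j (vtx j)"
      by (simp add: y psi_vtx)
    then show ?thesis
      using vtx_vertex_orbit by blast
  next
    case (Suc m)
    then have "y = psi (w 0) (psiw (\<lambda>k. w (Suc k)) m (vtx j))"
      by (simp only: y psiw_Suc_left o_apply)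
    then show ?thesis
      unfolding vertex_orbit_def by blast
  qed
qed

lemma closure_vertex_orbit_self_similar:
  "closure vertex_orbit = (\<Union>i. psi i ` closure vertex_orbit)"
proof
  have "compact (psi i ` closure vertex_orbit)" for i
    by (rule compact_continuous_image[OF continuous_on_psi compact_closure_vertex_orbit])
  then have "closed (\<Union>i. psi i ` closure vertex_orbit)"
    by (simp add: compact_imp_closed compact_UN)
  moreover have "vertex_orbit \<subseteq> (\<Union>i. psi i ` closure vertex_orbit)"
  proof -
    have "vertex_orbit \<subseteq> (\<Union>i. psi i ` vertex_orbit)"
      by (rule vertex_orbit_subset_cells)
    also have "\<dots> \<subseteq> (\<Union>i. psi i ` closure vertex_orbit)"
      using closure_subset by (intro UN_mono image_mono) simp_all
    finally show ?thesis .
  qed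
  ultimately show "closure vertex_orbit \<subseteq> (\<Union>i. psi i ` closure vertex_orbit)"
    by (rule closure_minimal[rotated])
next
  have "psi i ` closure vertex_orbit \<subseteq> closure vertex_orbit" for i
  proof (rule image_closure_subset[OF continuous_on_psi closed_closure])
    show "psi i ` vertex_orbit \<subseteq> closure vertex_orbit"
      using psi_vertex_orbit closure_subset by (rule subset_trans)
  qed
  then show "(\<Union>i. psi i ` closure vertex_orbit) \<subseteq> closure vertex_orbit"
    by blast
qed

lemma self_similar_psiw_image:
  assumes "K = (\<Union>i. psi i ` K)"
  shows "psiw w n ` K \<subseteq> K"
proof (induction n)
  case (Suc n)
  have "psiw w (Suc n) ` K = psiw w n ` psi (w n) ` K"
    by (simp add: image_comp)
  also have "\<dots> \<subseteq> psiw w n ` K"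
    using assms by (intro image_mono) blast
  finally show ?case
    using Suc.IH by blast
qed simp

lemma self_similar_psiw_preimage:
  assumes "K = (\<Union>i. psi i ` K)" "z \<in> K"
  shows "\<exists>w z'. z' \<in> K \<and> z = psiw w n z'"
proof (induction n)
  case (Suc n)
  then obtain w z' where z': "z' \<in> K" "z = psiw w n z'"
    by blast
  then obtain i z'' where "z'' \<in> K" "z' = psi i z''"
    using assms(1) by blast
  moreover have "psiw (w(n := i)) n = psiw w n"
    by (rule psiw_cong) simp
  ultimately have "z = psiw (w(n := i)) (Suc n) z''"
    by (simp add: z'(2))
  with \<open>z'' \<in> K\<close> show ?case
    by blast
qed (use assms(2) in auto)

lemma self_similar_eq_closure_vertex_orbit:
  assumes "K \<noteq> {}" "compact K" and self_similar: "K = (\<Union>i. psi i ` K)"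
  shows "K = closure vertex_orbit"
proof
  have "closed K"
    using assms(2) by (rule compact_imp_closed)
  obtain p where "p \<in> K"
    using assms(1) by blast
  have "vtx i \<in> K" for i
  proof -
    have "psiw (\<lambda>_. i) n (vtx i) = vtx i" for n
      by (induction n) (simp_all add: psi_vtx)
    moreover have "psiw (\<lambda>_. i) n p \<in> K" for n
      using self_similar_psiw_image[OF self_similar] \<open>p \<in> K\<close> by blast
    ultimately have "\<exists>a\<in>K. dist a (vtx i) \<le> (3/5)^n * dist p (vtx i)" for n
      using dist_psiw_le[of "\<lambda>_. i" n p "vtx i"] by metis
    then have "vtx i \<in> closure K"
      by (rule mem_closure_power_boundI) simp_all
    with \<open>closed K\<close> show ?thesis
      by simp
  qed
  then have "vertex_orbit \<subseteq> K"
    unfolding vertex_orbit_def using self_similar_psiw_image[OF self_similar] by blast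
  with \<open>closed K\<close> show "closure vertex_orbit \<subseteq> K"
    by (rule closure_minimal[rotated])
next
  obtain R where R: "\<forall>z\<in>K. dist (vtx I1) z \<le> R"
    using compact_imp_bounded[OF assms(2)] bounded_any_center[of K "vtx I1"] by blast
  show "K \<subseteq> closure vertex_orbit"
  proof
    fix z
    assume "z \<in> K"
    have "\<exists>a\<in>vertex_orbit. dist a z \<le> (3/5)^n * R" for n
    proof -
      obtain w z' where z': "z' \<in> K" "z = psiw w n z'"
        using self_similar_psiw_preimage[OF self_similar \<open>z \<in> K\<close>] by blast
      have "dist (psiw w n (vtx I1)) z \<le> (3/5)^n * dist (vtx I1) z'"
        unfolding z'(2) by (rule dist_psiw_le)
      also have "\<dots> \<le> (3/5)^n * R"
        using R z'(1) by (intro mult_left_mono) simp_all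
      finally show ?thesis
        unfolding vertex_orbit_def by blast
    qed
    then show "z \<in> closure vertex_orbit"
      by (rule mem_closure_power_boundI) simp_all
  qed
qed

lemma HSG_eq_closure_vertex_orbit: "HSG = closure vertex_orbit"
proof -
  have "\<exists>!K. K \<noteq> {} \<and> compact K \<and> K = (\<Union>i. psi i ` K)"
  proof (rule ex1I[of _ "closure vertex_orbit"])
    show "closure vertex_orbit \<noteq> {} \<and> compact (closure vertex_orbit) \<and>
        closure vertex_orbit = (\<Union>i. psi i ` closure vertex_orbit)"
      using vtx_vertex_orbit closure_subset compact_closure_vertex_orbit
        closure_vertex_orbit_self_similar by blast
  next
    fix K
    assume "K \<noteq> {} \<and> compact K \<and> K = (\<Union>i. psi i ` K)"
    then show "K = closure vertex_orbit"
      by (elim conjE) (rule self_similar_eq_closure_vertex_orbit)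
  qed
  then have "HSG \<noteq> {} \<and> compact HSG \<and> HSG = (\<Union>i. psi i ` HSG)"
    unfolding HSG_def by (rule theI')
  then show ?thesis
    by (elim conjE) (rule self_similar_eq_closure_vertex_orbit)
qed

lemma HSG_subset_triangle: "HSG \<subseteq> triangle"
  using HSG_eq_closure_vertex_orbit closure_vertex_orbit_triangle by simp

lemma HSG_subset_cells: "HSG \<subseteq> (\<Union>i. psi i ` triangle)"
proof -
  have "HSG = (\<Union>i. psi i ` HSG)"
    using HSG_eq_closure_vertex_orbit closure_vertex_orbit_self_similar by simp
  also have "\<dots> \<subseteq> (\<Union>i. psi i ` triangle)"
    using HSG_subset_triangle by (intro UN_mono image_mono) simp_all
  finally show ?thesis .
qed

section \<open>Uniqueness of codings off N\<close>

lemma cells_meet_at_vertex: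
  assumes "z \<in> triangle" "z' \<in> triangle" "psi i z = psi j z'" "i \<noteq> j"
  shows "psi i z = psi i (vtx j)"
proof (rule bary_eqI)
  fix l
  define y where "y = psi i z"
  have y': "y = psi j z'"
    using assms(3) by (simp add: y_def)
  have "2/5 \<le> bary i y"
    unfolding y_def using assms(1) by (rule bary_psi_cell(1))
  moreover have "2/5 \<le> bary j y"
    unfolding y' using assms(2) by (rule bary_psi_cell(1))
  moreover have "k \<noteq> i \<Longrightarrow> 1 - bary i y \<le> 3 * bary k y" for k
    unfolding y_def using assms(1) by (rule bary_psi_cell(2))
  moreover have "k \<noteq> j \<Longrightarrow> 1 - bary j y \<le> 3 * bary k y" for k
    unfolding y' using assms(2) by (rule bary_psi_cell(2))
  ultimately show "bary l y = bary l (psi i (vtx j))"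
    using sum_bary[of y] assms(4)
    by (cases i; cases j; cases l) (simp_all add: bary_psi bary_vtx; smt (verit))+
qed

lemma Phi_in_cell: "Phi w \<in> psiw w (Suc l) ` triangle"
proof -
  define S where "S l = psiw w (Suc l) ` triangle" for l
  have closed: "closed (S l)" for l
    unfolding S_def using continuous_on_psiw compact_triangle
    by (intro compact_imp_closed compact_continuous_image)
  have nonempty: "S l \<noteq> {}" for l
    unfolding S_def using vtx_triangle by blast
  have "S (Suc l) \<subseteq> S l" for l
  proof -
    have "S (Suc l) = psiw w (Suc l) ` psi (w (Suc l)) ` triangle"
      unfolding S_def by (simp add: image_comp)
    also have "\<dots> \<subseteq> S l"
      unfolding S_def using psi_triangle by (intro image_mono) blast
    finally show ?thesis .
  qed
  then have decreasing: "m \<le> n \<Longrightarrow> S n \<subseteq> S m" for m n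
    by (rule lift_Suc_antimono_le)
  have shrinking: "\<exists>n. \<forall>p\<in>S n. \<forall>q\<in>S n. dist p q < e" if "0 < e" for e
  proof -
    obtain N where N: "\<forall>n\<ge>N. (3/5)^n * diameter triangle < e"
      using eventually_power_mult_less[of "3/5" e] \<open>0 < e\<close> by (auto simp: eventually_sequentially)
    have "dist (psiw w (Suc N) p) (psiw w (Suc N) q) < e" if "p \<in> triangle" "q \<in> triangle" for p q
    proof -
      have "dist (psiw w (Suc N) p) (psiw w (Suc N) q) \<le> (3/5)^Suc N * dist p q"
        by (rule dist_psiw_le)
      also have "\<dots> \<le> (3/5)^Suc N * diameter triangle"
        using that compact_triangle
        by (intro mult_left_mono diameter_bounded_bound) (simp_all add: compact_imp_bounded)
      also have "\<dots> < e"
        by (rule N[rule_format]) simp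
      finally show ?thesis .
    qed
    then show ?thesis
      unfolding S_def by blast
  qed
  obtain a where a: "(\<Inter>l. psiw w (Suc l) ` triangle) = {a}"
    using decreasing_closed_nest_sing[OF closed nonempty decreasing shrinking] unfolding S_def by blast
  then have "Phi w = a"
    unfolding Phi_def by (rule the_equality) (use a in auto)
  with a show ?thesis
    by blast
qed

lemma Phi_coding_unique:
  assumes "Phi w = Phi w'" "Phi w \<notin> Nset"
  shows "w = w'"
proof (rule ccontr)
  assume "w \<noteq> w'"
  then have "\<exists>m. w m \<noteq> w' m"
    by auto
  from exists_least_iff[THEN iffD1, OF this]
  obtain m where m: "w m \<noteq> w' m" "\<forall>k<m. \<not> w k \<noteq> w' k"
    by blast
  obtain z z' where z: "z \<in> triangle" "Phi w = psiw w (Suc m) z"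
    and z': "z' \<in> triangle" "Phi w' = psiw w' (Suc m) z'"
    using Phi_in_cell by blast
  have "psiw w m = psiw w' m"
    using m(2) by (intro psiw_cong) simp
  then have "psiw w m (psi (w m) z) = psiw w m (psi (w' m) z')"
    using z(2) z'(2) assms(1) by simp
  then have "psi (w m) z = psi (w' m) z'"
    by (rule injD[OF inj_psiw])
  then have "Phi w = psiw w (Suc m) (vtx (w' m))"
    using cells_meet_at_vertex[OF z(1) z'(1) _ m(1)] z(2) by simp
  with assms(2) show False
    unfolding Nset_def by blast
qed

section \<open>Projections and the tilt of a matrix\<close>

definition rot :: "real^2 \<Rightarrow> real^2" where
  "rot V = vector [- V$2, V$1]"

lemma norm_rot: "norm (rot V) = norm V"
  by (simp add: norm_eq_sqrt_inner inner_vec2 rot_def algebra_simps)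

lemma inner_rot_self: "rot V \<bullet> V = 0"
  by (simp add: inner_vec2 rot_def)

lemma norm_projP: "norm V = 1 \<Longrightarrow> norm (projP V y) = \<bar>y \<bullet> V\<bar>"
  by (simp add: projP_def)

lemma projPerp_eq_rot:
  assumes "norm V = 1"
  shows "projPerp V y = (y \<bullet> rot V) *\<^sub>R rot V"
proof -
  have "(V$1)\<^sup>2 + (V$2)\<^sup>2 = 1"
    using assms norm_vec2_sq[of V] by simp
  then have "y$1 - (y$1 * V$1 + y$2 * V$2) * V$1 = (- y$1 * V$2 + y$2 * V$1) * (- V$2)"
    "y$2 - (y$1 * V$1 + y$2 * V$2) * V$2 = (- y$1 * V$2 + y$2 * V$1) * V$1"
    by algebra+
  then show ?thesis
    by (simp add: vec_eq_iff forall_2 projPerp_def projP_def rot_def inner_vec2)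
qed

lemma inner_matrix_vector_mult: "((D::real^2^2) *v d) \<bullet> U = d \<bullet> (transpose D *v U)"
  by (simp add: inner_vec2 matrix_vector_mult_vec2_nth transpose_def algebra_simps)

lemma norm_projP_mult:
  "norm V = 1 \<Longrightarrow> norm (projP V ((D::real^2^2) *v d)) = \<bar>d \<bullet> (transpose D *v V)\<bar>"
  by (simp only: norm_projP inner_matrix_vector_mult)

lemma norm_projPerp_mult_le:
  fixes D :: "real^2^2"
  assumes "norm V = 1"
  shows "norm (projPerp V (D *v d)) \<le> norm d * norm (transpose D *v rot V)"
proof -
  have "norm (projPerp V (D *v d)) = \<bar>d \<bullet> (transpose D *v rot V)\<bar>"
    using assms by (simp only: projPerp_eq_rot norm_scaleR norm_rot inner_matrix_vector_mult)
  also have "\<dots> \<le> norm d * norm (transpose D *v rot V)"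
    by (rule Cauchy_Schwarz_ineq2)
  finally show ?thesis .
qed

definition tilt :: "real^2^2 \<Rightarrow> real^2 \<Rightarrow> real" where
  "tilt D V = norm (transpose D *v rot V) / norm (transpose D *v V)"

lemma norm_projPerp_le_tilt:
  fixes D :: "real^2^2"
  assumes "norm V = 1" "transpose D *v V \<noteq> 0"
    and "norm d \<le> a * r" "norm (transpose D *v V) * r \<le> b * p" "0 \<le> a"
  shows "norm (projPerp V (D *v d)) \<le> a * b * tilt D V * p"
proof -
  have "0 \<le> norm (transpose D *v V) * tilt D V"
    by (simp add: tilt_def)
  have "norm (projPerp V (D *v d)) \<le> norm d * (norm (transpose D *v V) * tilt D V)"
    using norm_projPerp_mult_le[OF assms(1)] assms(2) by (simp add: tilt_def)
  also have "\<dots> \<le> a * r * (norm (transpose D *v V) * tilt D V)"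
    using assms(3) \<open>0 \<le> norm (transpose D *v V) * tilt D V\<close> by (rule mult_right_mono)
  also have "\<dots> = a * tilt D V * (norm (transpose D *v V) * r)"
    by (simp add: algebra_simps)
  also have "\<dots> \<le> a * tilt D V * (b * p)"
    using assms(4,5) by (intro mult_left_mono) (simp_all add: tilt_def)
  finally show ?thesis
    by (simp add: algebra_simps)
qed

lemma inner_projmat: "U \<bullet> (projmat V *v U) = (U \<bullet> V)\<^sup>2"
  by (simp add: inner_vec2 matrix_vector_mult_vec2_nth projmat_def power2_eq_square algebra_simps)

lemma norm_transpose_mult_sq:
  fixes D :: "real^2^2"
  assumes "hs_sq D \<noteq> 0"
  shows "(norm (transpose D *v U))\<^sup>2 = hs_sq D * (U \<bullet> (((1 / hs_sq D) *\<^sub>R (D ** transpose D)) *v U))"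
proof -
  have "(norm (transpose D *v U))\<^sup>2 = (D *v (transpose D *v U)) \<bullet> U"
    by (simp only: power2_norm_eq_inner inner_matrix_vector_mult)
  also have "\<dots> = U \<bullet> ((D ** transpose D) *v U)"
    by (simp only: matrix_vector_mul_assoc inner_commute)
  also have "\<dots> = hs_sq D * (U \<bullet> (((1 / hs_sq D) *\<^sub>R (D ** transpose D)) *v U))"
    using assms by (simp flip: scaleR_matrix_vector_assoc)
  finally show ?thesis .
qed

lemma tilt_tendsto_0:
  fixes D :: "'a \<Rightarrow> real^2^2"
  assumes lim: "((\<lambda>l. (1 / hs_sq (D l)) *\<^sub>R (D l ** transpose (D l))) \<longlongrightarrow> projmat V) F"
    and V: "norm V = 1"
  shows "((\<lambda>l. tilt (D l) V) \<longlongrightarrow> 0) F"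
    and "eventually (\<lambda>l. transpose (D l) *v V \<noteq> 0) F"
proof -
  define M where "M l = (1 / hs_sq (D l)) *\<^sub>R (D l ** transpose (D l))" for l
  have quadratic_form: "((\<lambda>l. U \<bullet> (M l *v U)) \<longlongrightarrow> (U \<bullet> V)\<^sup>2) F" for U
  proof -
    have "linear (\<lambda>A::real^2^2. U \<bullet> (A *v U))"
      by (auto simp: linear_iff matrix_vector_mult_add_rdistrib inner_add_right
          simp flip: scaleR_matrix_vector_assoc)
    then have "bounded_linear (\<lambda>A::real^2^2. U \<bullet> (A *v U))"
      by (simp add: linear_conv_bounded_linear)
    from bounded_linear.tendsto[OF this lim[folded M_def]] show ?thesis
      by (simp only: inner_projmat)
  qed
  have "V \<bullet> V = 1"
    using V by (simp add: dot_square_norm)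
  then have "((\<lambda>l. V \<bullet> (M l *v V)) \<longlongrightarrow> 1) F"
    using quadratic_form[of V] by simp
  then have "eventually (\<lambda>l. 1/2 < V \<bullet> (M l *v V)) F"
    by (rule order_tendstoD(1)) simp
  then have ev: "eventually (\<lambda>l. transpose (D l) *v V \<noteq> 0 \<and>
      (tilt (D l) V)\<^sup>2 = (rot V \<bullet> (M l *v rot V)) / (V \<bullet> (M l *v V))) F"
  proof eventually_elim
    case (elim l)
    then have "hs_sq (D l) \<noteq> 0"
      by (auto simp: M_def)
    note norm_sq = norm_transpose_mult_sq[OF this, folded M_def]
    have "(norm (transpose (D l) *v V))\<^sup>2 \<noteq> 0"
      using elim \<open>hs_sq (D l) \<noteq> 0\<close> by (simp only: norm_sq) simp
    then have "transpose (D l) *v V \<noteq> 0"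
      by auto
    moreover have "(tilt (D l) V)\<^sup>2 = (rot V \<bullet> (M l *v rot V)) / (V \<bullet> (M l *v V))"
      using \<open>hs_sq (D l) \<noteq> 0\<close> by (simp only: tilt_def power_divide norm_sq) simp
    ultimately show ?case
      by blast
  qed
  then show "eventually (\<lambda>l. transpose (D l) *v V \<noteq> 0) F"
    by (rule eventually_mono) (rule conjunct1)
  have "((\<lambda>l. (rot V \<bullet> (M l *v rot V)) / (V \<bullet> (M l *v V))) \<longlongrightarrow> (rot V \<bullet> V)\<^sup>2 / (V \<bullet> V)\<^sup>2) F"
    using \<open>V \<bullet> V = 1\<close> by (intro tendsto_divide quadratic_form) simp
  then have "((\<lambda>l. (rot V \<bullet> (M l *v rot V)) / (V \<bullet> (M l *v V))) \<longlongrightarrow> 0) F"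
    by (simp add: inner_rot_self)
  moreover have "eventually (\<lambda>l. (rot V \<bullet> (M l *v rot V)) / (V \<bullet> (M l *v V)) = (tilt (D l) V)\<^sup>2) F"
    using ev by (rule eventually_mono) simp
  ultimately have "((\<lambda>l. (tilt (D l) V)\<^sup>2) \<longlongrightarrow> 0) F"
    by (rule Lim_transform_eventually)
  from tendsto_real_sqrt[OF this] have "((\<lambda>l. \<bar>tilt (D l) V\<bar>) \<longlongrightarrow> 0) F"
    by simp
  then show "((\<lambda>l. tilt (D l) V) \<longlongrightarrow> 0) F"
    by (simp only: tendsto_rabs_zero_iff)
qed

section \<open>Separated pairs of vertices\<close>

definition osc :: "(idx \<Rightarrow> real) \<Rightarrow> real" where
  "osc \<alpha> = max \<bar>\<alpha> I1 - \<alpha> I2\<bar> (max \<bar>\<alpha> I2 - \<alpha> I3\<bar> \<bar>\<alpha> I3 - \<alpha> I1\<bar>)"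

text \<open>
  In applications \<open>\<alpha> i = q \<bullet> vtx i\<close> and \<open>t\<close> are the barycentric coordinates of a point \<open>y\<close>,
  so that \<open>\<Sum>k. t k * \<alpha> k = q \<bullet> y\<close>; the factor 15 is what the case analysis below affords.
\<close>

definition separated :: "(idx \<Rightarrow> real) \<Rightarrow> (idx \<Rightarrow> real) \<Rightarrow> idx \<Rightarrow> idx \<Rightarrow> bool" where
  "separated t \<alpha> P Q \<longleftrightarrow> P \<noteq> Q \<and> osc \<alpha> \<le> 15 * \<bar>\<alpha> P - \<alpha> Q\<bar> \<and>
     osc \<alpha> * (1 - t P) \<le> 15 * \<bar>(\<Sum>k\<in>UNIV. t k * \<alpha> k) - \<alpha> P\<bar> \<and>
     osc \<alpha> * (1 - t Q) \<le> 15 * \<bar>(\<Sum>k\<in>UNIV. t k * \<alpha> k) - \<alpha> Q\<bar>"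

text \<open>
  The vertex with coordinate \<open>t0 \<ge> 2/5\<close> sits at \<open>0\<close> and the other two at \<open>b \<ge> |g|\<close>:
  the pair \<open>{0, b}\<close> works unless \<open>g < -b/5\<close>, in which case \<open>{b, g}\<close> does.
\<close>

lemma separated_pair_real:
  fixes t0 t1 t2 b g :: real
  assumes t: "t0 + t1 + t2 = 1" "2/5 \<le> t0" "1 - t0 \<le> 3 * t1" "1 - t0 \<le> 3 * t2"
    and bg: "\<bar>g\<bar> \<le> b"
  defines "D \<equiv> max \<bar>b\<bar> (max \<bar>b - g\<bar> \<bar>g\<bar>)" and "u \<equiv> t1 * b + t2 * g"
  shows "(D \<le> 15 * \<bar>b\<bar> \<and> D * (1 - t0) \<le> 15 * \<bar>u\<bar> \<and> D * (1 - t1) \<le> 15 * \<bar>u - b\<bar>) \<or>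
    (D \<le> 15 * \<bar>b - g\<bar> \<and> D * (1 - t1) \<le> 15 * \<bar>u - b\<bar> \<and> D * (1 - t2) \<le> 15 * \<bar>u - g\<bar>)"
proof -
  define s where "s = 1 - t0"
  have "0 \<le> s" "0 \<le> t1" "0 \<le> t2" "t1 \<le> 1" "t2 \<le> 1" "0 \<le> b"
    using t bg by (simp_all add: s_def)
  have D: "D = (if 0 \<le> g then b else b - g)"
    using bg by (auto simp: D_def)
  then have "0 \<le> D" "D \<le> 2 * b"
    using bg by auto
  have "b - u = t0 * b + t2 * (b - g)"
    using t(1) unfolding u_def by algebra
  moreover have "2/5 * b \<le> t0 * b"
    using t(2) \<open>0 \<le> b\<close> by (rule mult_right_mono)
  moreover have "0 \<le> t2 * (b - g)"
    using \<open>0 \<le> t2\<close> bg by simp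
  moreover have "D * (1 - t1) \<le> D"
    using \<open>0 \<le> D\<close> \<open>0 \<le> t1\<close> by (simp add: mult_left_le)
  ultimately have "D * (1 - t1) \<le> 5 * (b - u)"
    using \<open>D \<le> 2 * b\<close> \<open>0 \<le> b\<close> by (simp add: algebra_simps)
  moreover have "5 * (b - u) \<le> 15 * \<bar>u - b\<bar>"
    by (simp add: abs_if)
  ultimately have common: "D * (1 - t1) \<le> 15 * \<bar>u - b\<bar>"
    by (rule order_trans)
  show ?thesis
  proof (cases "0 \<le> b + 5 * g")
    case True
    have "s * b \<le> 3 * (t1 * b)"
      using mult_right_mono[OF t(3) \<open>0 \<le> b\<close>] by (simp add: s_def)
    have "0 \<le> s * b"
      using \<open>0 \<le> s\<close> \<open>0 \<le> b\<close> by simp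
    have "D * s \<le> 15 * u"
    proof (cases "0 \<le> g")
      case True
      then have "D * s = s * b" "0 \<le> t2 * g"
        using D \<open>0 \<le> t2\<close> by simp_all
      with \<open>s * b \<le> 3 * (t1 * b)\<close> \<open>0 \<le> s * b\<close> show ?thesis
        unfolding u_def ring_distribs by linarith
    next
      case False
      have "2 * (s * g) \<le> 3 * (t2 * g)"
        using mult_right_mono_neg[of "3 * t2" "2 * s" g] t(1) t(3) False by (simp add: s_def)
      moreover have "- (s * b) \<le> 5 * (s * g)"
        using mult_left_mono[of "- b" "5 * g" s] True \<open>0 \<le> s\<close> by simp
      moreover have "D * s \<le> 6/5 * (s * b)"
        using mult_right_mono[of "b - g" "6/5 * b" s] True False D \<open>0 \<le> s\<close> by (simp add: mult_ac)
      ultimately show ?thesis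
        using \<open>s * b \<le> 3 * (t1 * b)\<close> \<open>0 \<le> s * b\<close> unfolding u_def ring_distribs by linarith
    qed
    then show ?thesis
      using common \<open>D \<le> 2 * b\<close> \<open>0 \<le> b\<close> by (simp add: s_def abs_if)
  next
    case False
    then have "D = b - g"
      using D bg by auto
    have "(1 - t2) * b \<le> 5 * (t2 * g - g)"
      using mult_left_mono[of b "- 5 * g" "1 - t2"] False \<open>t2 \<le> 1\<close> by (simp add: algebra_simps)
    moreover have "D * (1 - t2) \<le> 2 * ((1 - t2) * b)"
      using mult_right_mono[OF \<open>D \<le> 2 * b\<close>, of "1 - t2"] \<open>t2 \<le> 1\<close> by (simp add: mult_ac)
    moreover have "0 \<le> t1 * b" "0 \<le> (1 - t2) * b"
      using \<open>0 \<le> t1\<close> \<open>t2 \<le> 1\<close> \<open>0 \<le> b\<close> by simp_all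
    ultimately have "D * (1 - t2) \<le> 15 * (u - g)"
      unfolding u_def ring_distribs by linarith
    then show ?thesis
      using common \<open>D = b - g\<close> \<open>0 \<le> D\<close> by (simp add: abs_if)
  qed
qed

lemma sum_idx_distinct:
  fixes i j k :: idx
  shows "i \<noteq> j \<Longrightarrow> j \<noteq> k \<Longrightarrow> k \<noteq> i \<Longrightarrow> (\<Sum>l\<in>UNIV. f l) = f i + f j + f k"
  by (cases i; cases j; cases k) (simp_all add: sum_UNIV_idx ac_simps)

lemma osc_distinct:
  "i \<noteq> j \<Longrightarrow> j \<noteq> k \<Longrightarrow> k \<noteq> i \<Longrightarrow> osc \<alpha> = max \<bar>\<alpha> i - \<alpha> j\<bar> (max \<bar>\<alpha> j - \<alpha> k\<bar> \<bar>\<alpha> k - \<alpha> i\<bar>)"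
  by (cases i; cases j; cases k) (simp_all add: osc_def abs_minus_commute max.commute max.left_commute)

lemma separated_uminus: "separated t (\<lambda>l. - \<alpha> l) P Q \<longleftrightarrow> separated t \<alpha> P Q"
proof -
  have "osc (\<lambda>l. - \<alpha> l) = osc \<alpha>"
    by (simp add: osc_def abs_minus_commute)
  moreover have "\<bar>(\<Sum>k\<in>UNIV. t k * - \<alpha> k) - - \<alpha> R\<bar> = \<bar>(\<Sum>k\<in>UNIV. t k * \<alpha> k) - \<alpha> R\<bar>" for R
    by (simp add: sum_negf abs_minus_commute)
  ultimately show ?thesis
    by (simp add: separated_def abs_minus_commute)
qed

lemma separated_pair_ordered:
  assumes ijk: "i \<noteq> j" "j \<noteq> k" "k \<noteq> i"
    and t: "t i + t j + t k = 1" "2/5 \<le> t i" "1 - t i \<le> 3 * t j" "1 - t i \<le> 3 * t k"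
    and \<alpha>: "\<bar>\<alpha> k - \<alpha> i\<bar> \<le> \<alpha> j - \<alpha> i"
  shows "separated t \<alpha> i j \<or> separated t \<alpha> j k"
proof -
  define b g where "b = \<alpha> j - \<alpha> i" and "g = \<alpha> k - \<alpha> i"
  define u where "u = t j * b + t k * g"
  have osc: "osc \<alpha> = max \<bar>b\<bar> (max \<bar>b - g\<bar> \<bar>g\<bar>)"
    using osc_distinct[OF ijk] by (simp add: b_def g_def abs_minus_commute)
  have sum: "(\<Sum>l\<in>UNIV. t l * \<alpha> l) = \<alpha> i + u"
    using sum_idx_distinct[OF ijk, of "\<lambda>l. t l * \<alpha> l"] t(1) unfolding u_def b_def g_def by algebra
  have "\<alpha> j = \<alpha> i + b" "\<alpha> k = \<alpha> i + g"
    by (simp_all add: b_def g_def)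
  then show ?thesis
    using separated_pair_real[OF t \<alpha>[folded b_def g_def]] ijk
    unfolding separated_def osc sum u_def by (auto simp: abs_minus_commute)
qed

lemma separated_pair_exists:
  assumes ijk: "i \<noteq> j" "j \<noteq> k" "k \<noteq> i"
    and t: "t i + t j + t k = 1" "2/5 \<le> t i" "1 - t i \<le> 3 * t j" "1 - t i \<le> 3 * t k"
  shows "\<exists>P Q. separated t \<alpha> P Q"
proof -
  have t': "t i + t k + t j = 1"
    using t(1) by simp
  have "\<bar>\<alpha> k - \<alpha> i\<bar> \<le> \<alpha> j - \<alpha> i \<or> \<bar>\<alpha> j - \<alpha> i\<bar> \<le> \<alpha> k - \<alpha> i \<or>
      \<bar>\<alpha> k - \<alpha> i\<bar> \<le> - \<alpha> j - - \<alpha> i \<or> \<bar>\<alpha> j - \<alpha> i\<bar> \<le> - \<alpha> k - - \<alpha> i"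
    by linarith
  then consider
      "separated t \<alpha> i j \<or> separated t \<alpha> j k"
    | "separated t \<alpha> i k \<or> separated t \<alpha> k j"
    | "separated t (\<lambda>l. - \<alpha> l) i j \<or> separated t (\<lambda>l. - \<alpha> l) j k"
    | "separated t (\<lambda>l. - \<alpha> l) i k \<or> separated t (\<lambda>l. - \<alpha> l) k j"
    using separated_pair_ordered[OF ijk t, of \<alpha>] separated_pair_ordered[OF ijk(3,2,1)[symmetric] t' t(2,4,3), of \<alpha>]
      separated_pair_ordered[OF ijk t, of "\<lambda>l. - \<alpha> l"]
      separated_pair_ordered[OF ijk(3,2,1)[symmetric] t' t(2,4,3), of "\<lambda>l. - \<alpha> l"]
    by (auto simp: abs_minus_commute)
  then show ?thesis
    by cases (auto simp: separated_uminus)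
qed

lemma separated_pair_of_cell:
  assumes "y \<in> psi i ` triangle"
  shows "\<exists>P Q. separated (\<lambda>l. bary l y) \<alpha> P Q"
proof -
  obtain j k where ijk: "i \<noteq> j" "j \<noteq> k" "k \<noteq> i"
    by (cases i) (metis idx.distinct)+
  have "bary i y + bary j y + bary k y = 1"
    using sum_idx_distinct[OF ijk, of "\<lambda>l. bary l y"] sum_bary[of y] by (simp add: sum_UNIV_idx)
  moreover from assms obtain z where z: "z \<in> triangle" "y = psi i z"
    by blast
  then have "2/5 \<le> bary i y" "1 - bary i y \<le> 3 * bary j y" "1 - bary i y \<le> 3 * bary k y"
    using bary_psi_cell ijk by simp_all
  ultimately show ?thesis
    by (rule separated_pair_exists[OF ijk])
qed

lemma permutes_with_values:
  assumes "a \<noteq> b" "c \<noteq> d"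
  shows "\<exists>\<sigma>. \<sigma> permutes UNIV \<and> \<sigma> a = c \<and> \<sigma> b = d"
proof -
  define \<tau> where "\<tau> = Transposition.transpose a c"
  define \<sigma> where "\<sigma> = Transposition.transpose (\<tau> b) d \<circ> \<tau>"
  have "\<tau> b \<noteq> c"
    using assms(1) by (auto simp: \<tau>_def Transposition.transpose_def)
  then have "\<sigma> a = c" "\<sigma> b = d"
    using assms(2) by (auto simp: \<sigma>_def \<tau>_def Transposition.transpose_def)
  moreover have "\<sigma> permutes UNIV"
    unfolding \<sigma>_def \<tau>_def by (intro permutes_compose permutes_swap_id) simp_all
  ultimately show ?thesis
    by blast
qed

lemma separating_labelling_exists:
  assumes "inj f"
  shows "\<exists>\<sigma>. \<sigma> permutes UNIV \<and> osc \<alpha> \<le> 15 * \<bar>\<alpha> (\<sigma> I1) - \<alpha> (\<sigma> I2)\<bar> \<and>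
    (\<forall>y\<in>HSG. x = f y \<longrightarrow> separated (\<lambda>l. bary l y) \<alpha> (\<sigma> I1) (\<sigma> I2))"
proof -
  \<comment> \<open>If \<open>x \<notin> f ` HSG\<close>, only the edge condition matters and any cell point will do.\<close>
  define y0 where "y0 = (if x \<in> f ` HSG then inv f x else vtx I1)"
  have "y0 \<in> (\<Union>i. psi i ` triangle)"
  proof (cases "x \<in> f ` HSG")
    case True
    then obtain y where "y \<in> HSG" "x = f y"
      by blast
    with assms have "y0 = y"
      by (simp add: y0_def)
    with \<open>y \<in> HSG\<close> HSG_subset_cells show ?thesis
      by blast
  next
    case False
    have "vtx I1 \<in> psi I1 ` triangle"
      using psi_vtx vtx_triangle by (metis image_eqI)
    with False show ?thesis
      by (auto simp: y0_def)
  qed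
  then obtain P Q where sep: "separated (\<lambda>l. bary l y0) \<alpha> P Q"
    using separated_pair_of_cell by blast
  then obtain \<sigma> where \<sigma>: "\<sigma> permutes UNIV" "\<sigma> I1 = P" "\<sigma> I2 = Q"
    using permutes_with_values[of I1 I2 P Q] by (auto simp: separated_def)
  have "y = y0" if "y \<in> HSG" "x = f y" for y
    using that assms by (auto simp: y0_def)
  with sep \<sigma> show ?thesis
    by (auto simp: separated_def)
qed

section \<open>Ratio estimates\<close>

lemma norm_le_osc: "norm (q::real^2) \<le> 2 * osc (\<lambda>i. q \<bullet> vtx i)"
proof -
  define u where "u = q$2 / sqrt 3"
  have "q \<bullet> vtx I1 = 0" "q \<bullet> vtx I2 = q$1 + u" "q \<bullet> vtx I3 = q$1 - u"
    by (simp_all add: inner_vec2 u_def divide_inverse)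
  then have osc_bounds: "\<bar>q$1 + u\<bar> \<le> osc (\<lambda>i. q \<bullet> vtx i)" "\<bar>q$1 - u\<bar> \<le> osc (\<lambda>i. q \<bullet> vtx i)"
    "\<bar>(q$1 + u) - (q$1 - u)\<bar> \<le> osc (\<lambda>i. q \<bullet> vtx i)"
    unfolding osc_def by (simp_all add: abs_minus_commute)
  have "sqrt 3 \<le> (2::real)"
    by (rule real_le_lsqrt) simp_all
  then have "sqrt 3 * \<bar>q$2\<bar> \<le> 2 * \<bar>q$2\<bar>"
    by (rule mult_right_mono) simp
  then have "\<bar>q$2\<bar> \<le> 2 * \<bar>u\<bar>"
    by (simp add: u_def abs_div field_simps)
  moreover have "norm q \<le> \<bar>q$1\<bar> + \<bar>q$2\<bar>"
    using norm_le_l1_cart[of q] by (simp add: sum_2)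
  moreover have "2 * \<bar>q$1\<bar> \<le> \<bar>q$1 + u\<bar> + \<bar>q$1 - u\<bar>"
    using abs_triangle_ineq[of "q$1 + u" "q$1 - u"] by simp
  moreover have "\<bar>(q$1 + u) - (q$1 - u)\<bar> = 2 * \<bar>u\<bar>"
    by simp
  ultimately show ?thesis
    using osc_bounds by linarith
qed

lemma edge_ratio_le:
  fixes D :: "real^2^2" and V :: "real^2"
  defines "q \<equiv> transpose D *v V"
  assumes V: "norm V = 1" and "q \<noteq> 0"
    and sep: "osc (\<lambda>i. q \<bullet> vtx i) \<le> 15 * \<bar>q \<bullet> vtx P - q \<bullet> vtx Q\<bar>"
  defines "p \<equiv> norm (projP V (D *v (vtx P - vtx Q)))"
  shows "p \<noteq> 0"
    and "max (norm (projPerp V (D *v (vtx P - vtx Q))))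
          (max (norm (projPerp V (D *v (vtx Q - vtx R)))) (norm (projPerp V (D *v (vtx R - vtx P)))))
        / p \<le> 60 * tilt D V"
proof -
  have "p = \<bar>(vtx P - vtx Q) \<bullet> q\<bar>"
    unfolding p_def q_def by (rule norm_projP_mult[OF V])
  also have "\<dots> = \<bar>q \<bullet> vtx P - q \<bullet> vtx Q\<bar>"
    by (simp add: inner_commute inner_diff_right)
  finally have "p = \<bar>q \<bullet> vtx P - q \<bullet> vtx Q\<bar>" .
  then have q_le: "norm q * 1 \<le> 30 * p"
    using norm_le_osc[of q] sep by simp
  then show "p \<noteq> 0"
    using \<open>q \<noteq> 0\<close> by auto
  have "norm (projPerp V (D *v (vtx i - vtx j))) \<le> 2 * 30 * tilt D V * p" for i j
    using V \<open>q \<noteq> 0\<close> _ q_le unfolding q_def by (rule norm_projPerp_le_tilt) (simp_all add: norm_vtx_diff_le)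
  with \<open>p \<noteq> 0\<close> show "max (norm (projPerp V (D *v (vtx P - vtx Q))))
          (max (norm (projPerp V (D *v (vtx Q - vtx R)))) (norm (projPerp V (D *v (vtx R - vtx P)))))
        / p \<le> 60 * tilt D V"
    by (simp add: p_def divide_le_eq)
qed

lemma vertex_ratio_le:
  fixes D :: "real^2^2" and V :: "real^2"
  defines "q \<equiv> transpose D *v V"
  assumes V: "norm V = 1" and "q \<noteq> 0" and y: "y \<in> triangle" "bary P y < 1"
    and sep: "osc (\<lambda>i. q \<bullet> vtx i) * (1 - bary P y) \<le> 15 * \<bar>q \<bullet> y - q \<bullet> vtx P\<bar>"
  defines "p \<equiv> norm (projP V (D *v (y - vtx P)))"
  shows "p \<noteq> 0" and "norm (projPerp V (D *v (y - vtx P))) / p \<le> 60 * tilt D V"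
proof -
  have "p = \<bar>(y - vtx P) \<bullet> q\<bar>"
    unfolding p_def q_def by (rule norm_projP_mult[OF V])
  also have "\<dots> = \<bar>q \<bullet> y - q \<bullet> vtx P\<bar>"
    by (simp add: inner_commute inner_diff_right)
  finally have "p = \<bar>q \<bullet> y - q \<bullet> vtx P\<bar>" .
  moreover have "norm q * (1 - bary P y) \<le> 2 * osc (\<lambda>i. q \<bullet> vtx i) * (1 - bary P y)"
    using norm_le_osc[of q] y(2) by (intro mult_right_mono) simp_all
  ultimately have q_le: "norm q * (1 - bary P y) \<le> 30 * p"
    using sep by simp
  moreover have "0 < norm q * (1 - bary P y)"
    using \<open>q \<noteq> 0\<close> y(2) by simp
  ultimately show "p \<noteq> 0"
    by linarith
  have "norm (projPerp V (D *v (y - vtx P))) \<le> 2 * 30 * tilt D V * p"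
    using V \<open>q \<noteq> 0\<close> norm_diff_vtx_le[OF y(1)] q_le unfolding q_def by (rule norm_projPerp_le_tilt) simp
  with \<open>p \<noteq> 0\<close> show "norm (projPerp V (D *v (y - vtx P))) / p \<le> 60 * tilt D V"
    by (simp add: p_def divide_le_eq)
qed

lemma Shat_tilt_tendsto_0:
  assumes kus: "kusuoka_pair \<kappa> v" and "x = Phi w" "x \<in> Shat v"
  shows "norm (v x) = 1"
    and "(\<lambda>n. tilt (Dw w (Suc n)) (v x)) \<longlonglongrightarrow> 0"
    and "eventually (\<lambda>n. transpose (Dw w (Suc n)) *v v x \<noteq> 0) sequentially"
proof -
  from assms(3) have "x \<in> Stilde v" "x \<notin> Nset"
    by (simp_all add: Shat_def)
  then obtain w' where "x \<in> HSG" "x = Phi w'"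
    and lim: "(\<lambda>l. (1 / hs_sq (Dw w' l)) *\<^sub>R (Dw w' l ** transpose (Dw w' l))) \<longlonglongrightarrow> projmat (v x)"
    unfolding Stilde_def by blast
  with assms(2) \<open>x \<notin> Nset\<close> have "w' = w"
    using Phi_coding_unique by metis
  show V: "norm (v x) = 1"
    using kus \<open>x \<in> HSG\<close> by (simp add: kusuoka_pair_def)
  show "(\<lambda>n. tilt (Dw w (Suc n)) (v x)) \<longlonglongrightarrow> 0"
    using tilt_tendsto_0(1)[OF lim V, unfolded \<open>w' = w\<close>] by (rule LIMSEQ_Suc)
  show "eventually (\<lambda>n. transpose (Dw w (Suc n)) *v v x \<noteq> 0) sequentially"
    using tilt_tendsto_0(2)[OF lim V, unfolded \<open>w' = w\<close>] by (rule eventually_sequentially_Suc[THEN iffD2])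
qed

lemma edge_ratios_tendsto_0:
  fixes w :: "nat \<Rightarrow> idx" and V :: "real^2" and P Q R :: "nat \<Rightarrow> idx"
  defines "q n \<equiv> transpose (Dw w (Suc n)) *v V"
  assumes V: "norm V = 1" and tilt: "(\<lambda>n. tilt (Dw w (Suc n)) V) \<longlonglongrightarrow> 0"
    and nondeg: "eventually (\<lambda>n. q n \<noteq> 0) sequentially"
    and sep: "\<And>n. osc (\<lambda>i. q n \<bullet> vtx i) \<le> 15 * \<bar>q n \<bullet> vtx (P n) - q n \<bullet> vtx (Q n)\<bar>"
  defines "A n \<equiv> psiw w (Suc n) (vtx (P n))" and "B n \<equiv> psiw w (Suc n) (vtx (Q n))"
    and "C n \<equiv> psiw w (Suc n) (vtx (R n))"
  shows "eventually (\<lambda>n. norm (projP V (A n - B n)) \<noteq> 0) sequentially \<and>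
    (\<lambda>n. max (norm (projPerp V (A n - B n))) (max (norm (projPerp V (B n - C n))) (norm (projPerp V (C n - A n))))
      / norm (projP V (A n - B n))) \<longlonglongrightarrow> 0"
proof -
  have ev: "eventually (\<lambda>n. norm (projP V (A n - B n)) \<noteq> 0 \<and>
      max (norm (projPerp V (A n - B n))) (max (norm (projPerp V (B n - C n))) (norm (projPerp V (C n - A n))))
      / norm (projP V (A n - B n)) \<le> 60 * tilt (Dw w (Suc n)) V) sequentially"
    using nondeg
  proof eventually_elim
    case (elim n)
    show ?case
      unfolding A_def B_def C_def psiw_diff
      using edge_ratio_le[OF V elim[unfolded q_def] sep[unfolded q_def]] by blast
  qed
  have "eventually (\<lambda>n. 0 \<le> max (norm (projPerp V (A n - B n)))
      (max (norm (projPerp V (B n - C n))) (norm (projPerp V (C n - A n)))) / norm (projP V (A n - B n))) sequentially"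
    by (intro always_eventually allI divide_nonneg_nonneg) (auto simp: le_max_iff_disj)
  moreover have "eventually (\<lambda>n. max (norm (projPerp V (A n - B n)))
      (max (norm (projPerp V (B n - C n))) (norm (projPerp V (C n - A n)))) / norm (projP V (A n - B n))
      \<le> 60 * tilt (Dw w (Suc n)) V) sequentially"
    using ev by (rule eventually_mono) blast
  moreover have "(\<lambda>n. 60 * tilt (Dw w (Suc n)) V) \<longlonglongrightarrow> 0"
    using tendsto_mult_right_zero[OF tilt] .
  ultimately have "(\<lambda>n. max (norm (projPerp V (A n - B n)))
      (max (norm (projPerp V (B n - C n))) (norm (projPerp V (C n - A n)))) / norm (projP V (A n - B n)))
      \<longlonglongrightarrow> 0"
    by (rule tendsto_sandwich[OF _ _ tendsto_const])
  moreover have "eventually (\<lambda>n. norm (projP V (A n - B n)) \<noteq> 0) sequentially"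
    using ev by (rule eventually_mono) blast
  ultimately show ?thesis
    by blast
qed

lemma vertex_ratios_tendsto_0:
  fixes w :: "nat \<Rightarrow> idx" and V :: "real^2" and P Q :: "nat \<Rightarrow> idx" and nk :: "nat \<Rightarrow> nat"
  defines "q n \<equiv> transpose (Dw w (Suc n)) *v V"
  assumes V: "norm V = 1" and tilt: "(\<lambda>n. tilt (Dw w (Suc n)) V) \<longlonglongrightarrow> 0"
    and nondeg: "eventually (\<lambda>n. q n \<noteq> 0) sequentially"
    and "x \<notin> Nset" "strict_mono nk" "S \<subseteq> HSG" "\<forall>k. x \<in> psiw w (Suc (nk k)) ` S"
    and sep: "\<And>n y. y \<in> HSG \<Longrightarrow> x = psiw w (Suc n) y \<Longrightarrow>
      separated (\<lambda>i. bary i y) (\<lambda>i. q n \<bullet> vtx i) (P n) (Q n)"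
  defines "A n \<equiv> psiw w (Suc n) (vtx (P n))" and "B n \<equiv> psiw w (Suc n) (vtx (Q n))"
  shows "eventually (\<lambda>k. norm (projP V (x - A (nk k))) \<noteq> 0 \<and> norm (projP V (x - B (nk k))) \<noteq> 0) sequentially \<and>
    (\<lambda>k. max (norm (projPerp V (x - A (nk k))) / norm (projP V (x - A (nk k))))
      (norm (projPerp V (x - B (nk k))) / norm (projP V (x - B (nk k))))) \<longlonglongrightarrow> 0"
proof -
  have "\<forall>k. \<exists>y. y \<in> HSG \<and> x = psiw w (Suc (nk k)) y"
    using assms(7,8) by blast
  then obtain y where y: "\<And>k. y k \<in> HSG" "\<And>k. x = psiw w (Suc (nk k)) (y k)"
    by metis
  have vertex_ratio: "norm (projP V (x - psiw w (Suc (nk k)) (vtx R))) \<noteq> 0 \<and>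
      norm (projPerp V (x - psiw w (Suc (nk k)) (vtx R))) / norm (projP V (x - psiw w (Suc (nk k)) (vtx R)))
        \<le> 60 * tilt (Dw w (Suc (nk k))) V"
    if "q (nk k) \<noteq> 0" "R = P (nk k) \<or> R = Q (nk k)" for k R
  proof -
    have "y k \<in> triangle"
      using y(1) HSG_subset_triangle by blast
    moreover have "y k \<noteq> vtx R"
    proof
      assume "y k = vtx R"
      with y(2)[of k] have "x = psiw w (Suc (nk k)) (vtx R)"
        by simp
      then have "x \<in> Nset"
        unfolding Nset_def by blast
      with \<open>x \<notin> Nset\<close> show False ..
    qed
    moreover have "osc (\<lambda>i. q (nk k) \<bullet> vtx i) * (1 - bary R (y k)) \<le> 15 * \<bar>q (nk k) \<bullet> y k - q (nk k) \<bullet> vtx R\<bar>"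
      using sep[OF y(1,2)] that(2) unfolding separated_def inner_eq_sum_bary[of "q (nk k)" "y k"] by blast
    moreover have "x - psiw w (Suc (nk k)) (vtx R) = Dw w (Suc (nk k)) *v (y k - vtx R)"
      by (subst y(2)[of k]) (rule psiw_diff)
    ultimately show ?thesis
      using vertex_ratio_le[OF V that(1)[unfolded q_def]] bary_lt_1 unfolding q_def by metis
  qed
  have "eventually (\<lambda>k. q (nk k) \<noteq> 0) sequentially"
    using nondeg filterlim_subseq[OF \<open>strict_mono nk\<close>] by (rule eventually_compose_filterlim)
  then have ev: "eventually (\<lambda>k. norm (projP V (x - A (nk k))) \<noteq> 0 \<and> norm (projP V (x - B (nk k))) \<noteq> 0 \<and>
      max (norm (projPerp V (x - A (nk k))) / norm (projP V (x - A (nk k))))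
        (norm (projPerp V (x - B (nk k))) / norm (projP V (x - B (nk k)))) \<le> 60 * tilt (Dw w (Suc (nk k))) V)
      sequentially"
  proof eventually_elim
    case (elim k)
    show ?case
      unfolding A_def B_def max.bounded_iff
      using vertex_ratio[OF elim, of "P (nk k)"] vertex_ratio[OF elim, of "Q (nk k)"] by blast
  qed
  have tilt_nk: "(\<lambda>k. tilt (Dw w (Suc (nk k))) V) \<longlonglongrightarrow> 0"
    using LIMSEQ_subseq_LIMSEQ[OF tilt \<open>strict_mono nk\<close>] by (simp only: comp_def)
  have "eventually (\<lambda>k. 0 \<le> max (norm (projPerp V (x - A (nk k))) / norm (projP V (x - A (nk k))))
      (norm (projPerp V (x - B (nk k))) / norm (projP V (x - B (nk k))))) sequentially"
    by (simp add: le_max_iff_disj)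
  moreover have "eventually (\<lambda>k. max (norm (projPerp V (x - A (nk k))) / norm (projP V (x - A (nk k))))
      (norm (projPerp V (x - B (nk k))) / norm (projP V (x - B (nk k)))) \<le> 60 * tilt (Dw w (Suc (nk k))) V)
      sequentially"
    using ev by (rule eventually_mono) blast
  moreover have "(\<lambda>k. 60 * tilt (Dw w (Suc (nk k))) V) \<longlonglongrightarrow> 0"
    using tendsto_mult_right_zero[OF tilt_nk] .
  ultimately have "(\<lambda>k. max (norm (projPerp V (x - A (nk k))) / norm (projP V (x - A (nk k))))
      (norm (projPerp V (x - B (nk k))) / norm (projP V (x - B (nk k))))) \<longlonglongrightarrow> 0"
    by (rule tendsto_sandwich[OF _ _ tendsto_const])
  moreover have "eventually (\<lambda>k. norm (projP V (x - A (nk k))) \<noteq> 0 \<and> norm (projP V (x - B (nk k))) \<noteq> 0)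
      sequentially"
    using ev by (rule eventually_mono) blast
  ultimately show ?thesis
    by blast
qed

theorem lemma3p1:
  fixes \<kappa> :: "(real^2) measure" and v :: "real^2 \<Rightarrow> real^2"
    and \<theta>0 :: real and w :: "nat \<Rightarrow> idx" and x :: "real^2"
  assumes kus: "kusuoka_pair \<kappa> v"
    and th0: "\<theta>0 > 0" "\<forall>\<theta>\<in>{0<..\<theta>0}. S_theta \<theta> \<noteq> {}"
    and xw: "x = Phi w" and xS: "x \<in> Shat v"
  shows "\<exists>\<sigma> :: nat \<Rightarrow> idx \<Rightarrow> idx. (\<forall>n. \<sigma> n permutes UNIV) \<and>
    (let An = (\<lambda>n. psiw w (Suc n) (vtx (\<sigma> n I1)));
         Bn = (\<lambda>n. psiw w (Suc n) (vtx (\<sigma> n I2)));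
         Cn = (\<lambda>n. psiw w (Suc n) (vtx (\<sigma> n I3)))
     in
      (eventually (\<lambda>n. norm (projP (v x) (An n - Bn n)) \<noteq> 0) sequentially \<and>
       (\<lambda>n. max (norm (projPerp (v x) (An n - Bn n)))
                 (max (norm (projPerp (v x) (Bn n - Cn n))) (norm (projPerp (v x) (Cn n - An n))))
            / norm (projP (v x) (An n - Bn n))) \<longlonglongrightarrow> 0) \<and>
      (\<forall>\<theta> (nk :: nat \<Rightarrow> nat). \<theta> \<in> {0<..\<theta>0} \<and> strict_mono nk \<and>
          (\<forall>k. x \<in> psiw w (Suc (nk k)) ` S_theta \<theta>) \<longrightarrow>
        eventually (\<lambda>k. norm (projP (v x) (x - An (nk k))) \<noteq> 0 \<and>
                        norm (projP (v x) (x - Bn (nk k))) \<noteq> 0) sequentially \<and>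
        (\<lambda>k. max (norm (projPerp (v x) (x - An (nk k))) / norm (projP (v x) (x - An (nk k))))
                  (norm (projPerp (v x) (x - Bn (nk k))) / norm (projP (v x) (x - Bn (nk k)))))
          \<longlonglongrightarrow> 0))"
proof -
  have "x \<notin> Nset"
    using xS by (simp add: Shat_def)
  note V = Shat_tilt_tendsto_0[OF kus xw xS]
  define q where "q n = transpose (Dw w (Suc n)) *v v x" for n
  have "\<forall>n. \<exists>\<sigma>. \<sigma> permutes UNIV \<and>
      osc (\<lambda>i. q n \<bullet> vtx i) \<le> 15 * \<bar>q n \<bullet> vtx (\<sigma> I1) - q n \<bullet> vtx (\<sigma> I2)\<bar> \<and>
      (\<forall>y\<in>HSG. x = psiw w (Suc n) y \<longrightarrow> separated (\<lambda>i. bary i y) (\<lambda>i. q n \<bullet> vtx i) (\<sigma> I1) (\<sigma> I2))"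
    using separating_labelling_exists[OF inj_psiw] by blast
  then obtain \<sigma> where \<sigma>: "\<And>n. \<sigma> n permutes UNIV"
    "\<And>n. osc (\<lambda>i. q n \<bullet> vtx i) \<le> 15 * \<bar>q n \<bullet> vtx (\<sigma> n I1) - q n \<bullet> vtx (\<sigma> n I2)\<bar>"
    "\<And>n y. y \<in> HSG \<Longrightarrow> x = psiw w (Suc n) y \<Longrightarrow>
      separated (\<lambda>i. bary i y) (\<lambda>i. q n \<bullet> vtx i) (\<sigma> n I1) (\<sigma> n I2)"
    by metis
  have S_theta: "S_theta \<theta> \<subseteq> HSG" for \<theta>
    by (auto simp: S_theta_def)
  note edge = edge_ratios_tendsto_0[OF V \<sigma>(2)[unfolded q_def], of "\<lambda>n. \<sigma> n I3"]
  note vertex = vertex_ratios_tendsto_0[OF V \<open>x \<notin> Nset\<close> _ S_theta _ \<sigma>(3)[unfolded q_def]]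
  show ?thesis
    unfolding Let_def
  proof (intro exI[of _ \<sigma>] conjI allI impI)
    fix n
    show "\<sigma> n permutes UNIV"
      by (rule \<sigma>(1))
  qed (use edge vertex in blast)+
qed

end
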